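(* Let $N\ge1$, $d$ be integers and $0\le m_1<\dots<m_N<d$. Then the Wronski determinant of the truncated binomials $P_{m_1;d},\dots,P_{m_N;d},P_{d;d}$ satisfies $$\det\Big(\tfrac{d^j}{dx^j}P_{m_i;d}(x)\Big)_{0\le i,j\le N}=c\cdot x^{\,m_1+\dots+m_N-N(N-1)/2}(x+1)^{d-N},$$ where $m_0:=d$ is used for the row of $P_{d;d}$ and $c$ is a nonzero constant.
   Context: The truncated binomial is $P_{m;d}(x)=\sum_{j=0}^{m}\binom{d}{j}x^j$ for $0\le m\le d$; $P_{d;d}(x)=(x+1)^d$. *)

theory Defs
  imports "Jordan_Normal_Form.Determinant" "HOL-Computational_Algebra.Polynomial"
begin

definition trunc_binom :: "nat \<Rightarrow> nat \<Rightarrow> real poly" where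
  "trunc_binom m d = (\<Sum>j\<le>m. monom (of_nat (d choose j)) j)"

definition wronski_tb :: "nat \<Rightarrow> nat \<Rightarrow> (nat \<Rightarrow> nat) \<Rightarrow> real poly mat" where
  "wronski_tb N d m = mat (Suc N) (Suc N)
     (\<lambda>(i, j). (pderiv ^^ j) (trunc_binom (if i = 0 then d else m i) d))"

end

theory Submission
  imports Defs
begin

text \<open>
  The operator L = (x + 1) D - d annihilates (x + 1)^d and maps P_{m;d} to
  -(d - m) (d choose m) x^m. Because (x + 1) D^(j+1) - (d - j) D^j = D^j L, multiplying the
  Wronski matrix from the right by a bidiagonal matrix of determinant (x + 1)^N replaces column
  j + 1 by the j-th derivatives of L applied to the rows; the first row becomes
  ((x + 1)^d, 0, ..., 0). Expanding along it leaves (x + 1)^d times a nonzero constant times the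
  Wronskian of x^(m_1), ..., x^(m_N). Scaling column j by x^j and row i by x^(-m_i) turns the
  latter into the matrix of falling factorials m_i (m_i - 1) ... (m_i - j + 1), which is
  nonsingular for distinct m_i: a kernel vector would give a polynomial of degree < N in the
  falling factorial basis vanishing at the N points m_i.
\<close>

definition wronski :: "nat \<Rightarrow> (nat \<Rightarrow> 'a::idom poly) \<Rightarrow> 'a poly mat" where
  "wronski n f = mat n n (\<lambda>(i, j). (pderiv ^^ j) (f i))"

lemma dim_wronski [simp]: "dim_row (wronski n f) = n" "dim_col (wronski n f) = n"
  by (simp_all add: wronski_def)

lemma wronski_carrier_mat [simp]: "wronski n f \<in> carrier_mat n n"
  by (simp add: wronski_def)

lemma index_wronski [simp]:
  "i < n \<Longrightarrow> j < n \<Longrightarrow> wronski n f $$ (i, j) = (pderiv ^^ j) (f i)"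
  by (simp add: wronski_def)

lemma wronski_cong: "(\<And>i. i < n \<Longrightarrow> f i = g i) \<Longrightarrow> wronski n f = wronski n g"
  unfolding wronski_def by (intro eq_matI) auto

lemma det_scale_rows:
  assumes "A \<in> carrier_mat n n"
  shows "det (mat n n (\<lambda>(i, j). c i * A $$ (i, j)))
    = (\<Prod>i<n. c i) * det (A :: 'a::comm_ring_1 mat)"
proof -
  have "mat n n (\<lambda>(i, j). c i * A $$ (i, j)) = mat\<^sub>r n n (\<lambda>i. c i \<cdot>\<^sub>v row A i)"
    using assms by (intro eq_matI) auto
  moreover have "A = mat\<^sub>r n n (row A)"
    using assms by (intro eq_matI) auto
  ultimately show ?thesis
    using det_rows_mul[of "row A" n c] assms by (simp add: atLeast0LessThan)
qed

lemma det_scale_cols: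
  assumes "A \<in> carrier_mat n n"
  shows "det (mat n n (\<lambda>(i, j). A $$ (i, j) * c j))
    = (\<Prod>j<n. c j) * det (A :: 'a::comm_ring_1 mat)"
proof -
  have "mat n n (\<lambda>(i, j). A $$ (i, j) * c j)
      = (mat n n (\<lambda>(i, j). c i * A\<^sup>T $$ (i, j)))\<^sup>T"
    using assms by (intro eq_matI) auto
  also have "det \<dots> = det (mat n n (\<lambda>(i, j). c i * A\<^sup>T $$ (i, j)))"
    by (rule det_transpose[of _ n]) simp
  also have "\<dots> = (\<Prod>j<n. c j) * det A\<^sup>T"
    using assms by (intro det_scale_rows) simp
  finally show ?thesis
    using assms by (simp add: det_transpose)
qed

lemma det_first_row_single:
  assumes A: "A \<in> carrier_mat (Suc n) (Suc n)"
    and row0: "\<And>j. 0 < j \<Longrightarrow> j < Suc n \<Longrightarrow> A $$ (0, j) = 0"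
  shows "det A = A $$ (0, 0) * det (mat_delete A 0 0)"
proof -
  have "det A = (\<Sum>j<Suc n. A $$ (0, j) * cofactor A 0 j)"
    by (rule laplace_expansion_row[OF A]) simp
  also have "\<dots> = A $$ (0, 0) * cofactor A 0 0"
    using row0 by (subst sum.lessThan_Suc_shift) simp
  finally show ?thesis
    by (simp add: cofactor_def)
qed

interpretation const_poly_hom: comm_ring_hom "\<lambda>x::'a::comm_ring_1. [:x:]"
  by unfold_locales (simp_all add: one_pCons)

lemma det_wronski_smult:
  "det (wronski n (\<lambda>i. smult (c i) (f i))) = smult (\<Prod>i<n. c i) (det (wronski n f))"
proof -
  have "wronski n (\<lambda>i. smult (c i) (f i)) = mat n n (\<lambda>(i, j). [:c i:] * wronski n f $$ (i, j))"
    by (intro eq_matI) (simp_all add: wronski_def higher_pderiv_smult)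
  also have "det \<dots> = (\<Prod>i<n. [:c i:]) * det (wronski n f)"
    by (rule det_scale_rows) simp
  finally show ?thesis
    by (simp flip: const_poly_hom.hom_prod)
qed

definition falling_fact :: "nat \<Rightarrow> nat \<Rightarrow> nat" where
  "falling_fact n j = (\<Prod>k<j. n - k)"

lemma falling_fact_eq_0: "n < j \<Longrightarrow> falling_fact n j = 0"
  unfolding falling_fact_def by (rule prod_zero) auto

lemma falling_fact_self_neq_0: "falling_fact n n \<noteq> 0"
  by (simp add: falling_fact_def)

lemma higher_pderiv_monom_falling_fact:
  "(pderiv ^^ j) (monom c n) = monom (of_nat (falling_fact n j) * c) (n - j)"
proof (induction j)
  case (Suc j)
  have "falling_fact n (Suc j) = (n - j) * falling_fact n j"
    by (simp add: falling_fact_def)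
  with Suc show ?case
    by (simp add: pderiv_monom mult.assoc)
qed (simp add: falling_fact_def)

lemma higher_pderiv_monom_mult_monom:
  "(pderiv ^^ j) (monom c n) * monom 1 j = monom (of_nat (falling_fact n j) * c) n"
  by (cases "j \<le> n") (simp_all add: higher_pderiv_monom_falling_fact mult_monom falling_fact_eq_0)

definition falling_poly :: "nat \<Rightarrow> 'a::comm_ring_1 poly" where
  "falling_poly j = (\<Prod>k<j. [:- of_nat k, 1:])"

lemma poly_falling_poly: "poly (falling_poly j) (of_nat n) = of_nat (falling_fact n j)"
proof (cases "j \<le> n")
  case True
  then show ?thesis
    by (simp add: falling_poly_def falling_fact_def poly_prod)
next
  case False
  then show ?thesis
    unfolding falling_poly_def by (simp add: falling_fact_eq_0 poly_prod, intro prod_zero) auto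
qed

lemma degree_falling_poly_le: "degree (falling_poly j) \<le> j"
proof -
  have "degree (falling_poly j :: 'a poly)
      \<le> sum (degree \<circ> (\<lambda>k. [:- of_nat k :: 'a, 1:])) {..<j}"
    unfolding falling_poly_def by (rule degree_prod_sum_le) simp
  also have "\<dots> = j"
    by simp
  finally show ?thesis .
qed

lemma falling_fact_combination_eq_0:
  fixes v :: "nat \<Rightarrow> 'a::{semiring_char_0, semiring_no_zero_divisors}"
  assumes vanish: "\<And>x. (\<Sum>j<n. v j * of_nat (falling_fact x j)) = 0" and "j < n"
  shows "v j = 0"
  using \<open>j < n\<close>
proof (induction j rule: less_induct)
  case (less j)
  have "(\<Sum>k<n. v k * of_nat (falling_fact j k))
      = v j * of_nat (falling_fact j j) + (\<Sum>k\<in>{..<n} - {j}. v k * of_nat (falling_fact j k))"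
    using less.prems by (intro sum.remove) auto
  also have "(\<Sum>k\<in>{..<n} - {j}. v k * of_nat (falling_fact j k)) = 0"
    using less.IH by (intro sum.neutral) (auto simp: falling_fact_eq_0 dest!: nat_neq_iff[THEN iffD1])
  finally show "v j = 0"
    using vanish[of j] falling_fact_self_neq_0[of j] by simp
qed

lemma det_falling_fact_neq_0:
  fixes g :: "nat \<Rightarrow> nat"
  assumes "inj_on g {..<n}"
  shows "det (mat n n (\<lambda>(i, j). of_nat (falling_fact (g i) j)) :: 'a::field_char_0 mat) \<noteq> 0"
proof
  let ?K = "mat n n (\<lambda>(i, j). of_nat (falling_fact (g i) j)) :: 'a mat"
  assume "det ?K = 0"
  then obtain v where v: "v \<in> carrier_vec n" "v \<noteq> 0\<^sub>v n" "?K *\<^sub>v v = 0\<^sub>v n"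
    using det_0_iff_vec_prod_zero_field[of ?K n] by auto
  then have "n > 0"
    by (intro Nat.gr0I) auto
  define p :: "'a poly" where "p = (\<Sum>j<n. smult (v $ j) (falling_poly j))"
  have poly_p: "poly p (of_nat x) = (\<Sum>j<n. v $ j * of_nat (falling_fact x j))" for x
    by (simp add: p_def poly_sum poly_falling_poly)
  have card_roots: "card (of_nat ` g ` {..<n} :: 'a set) = n"
    using assms by (simp add: card_image inj_on_def)
  have "p = 0"
  proof (rule poly_eqI_degree[of "of_nat ` g ` {..<n}"])
    fix y :: 'a
    assume "y \<in> of_nat ` g ` {..<n}"
    then obtain i where i: "i < n" "y = of_nat (g i)"
      by auto
    then have "poly p y = (?K *\<^sub>v v) $ i"
      using v(1) by (simp add: poly_p scalar_prod_def atLeast0LessThan mult.commute)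
    with v(3) i(1) show "poly p y = poly 0 y"
      by simp
  next
    have "degree p \<le> n - 1"
      unfolding p_def using degree_falling_poly_le
      by (intro degree_sum_le)
        (auto intro: order.trans[OF degree_smult_le] order.trans[OF degree_falling_poly_le])
    then show "degree p < card (of_nat ` g ` {..<n} :: 'a set)"
      using card_roots \<open>n > 0\<close> by linarith
  qed (use card_roots \<open>n > 0\<close> in simp_all)
  then have "v $ j = 0" if "j < n" for j
    using falling_fact_combination_eq_0[of "\<lambda>j. v $ j" n, OF _ that] poly_p by (metis poly_0)
  with v(1,2) show False
    by (auto intro: eq_vecI)
qed

lemma prod_monom_1: "(\<Prod>i\<in>A. monom (1::'a::comm_semiring_1) (f i)) = monom 1 (\<Sum>i\<in>A. f i)"
  by (induction A rule: infinite_finite_induct) (simp_all add: mult_monom)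

lemma det_wronski_monom_mult_monom:
  "det (wronski n (\<lambda>i. monom 1 (g i))) * monom 1 (\<Sum>j<n. j)
     = smult (det (mat n n (\<lambda>(i, j). of_nat (falling_fact (g i) j))))
         (monom (1::'a::idom) (\<Sum>i<n. g i))"
proof -
  let ?W = "wronski n (\<lambda>i. monom (1::'a) (g i))"
  let ?K = "mat n n (\<lambda>(i, j). of_nat (falling_fact (g i) j)) :: 'a mat"
  have "det ?W * monom 1 (\<Sum>j<n. j) = monom 1 (\<Sum>j<n. j) * det ?W"
    by (rule mult.commute)
  also have "\<dots> = det (mat n n (\<lambda>(i, j). ?W $$ (i, j) * monom 1 j))"
    by (simp add: det_scale_cols prod_monom_1)
  also have "mat n n (\<lambda>(i, j). ?W $$ (i, j) * monom 1 j)
      = mat n n (\<lambda>(i, j). monom 1 (g i) * map_mat (\<lambda>x. [:x:]) ?K $$ (i, j))"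
    by (intro eq_matI) (auto simp: higher_pderiv_monom_mult_monom mult_monom smult_monom)
  also have "det \<dots> = (\<Prod>i<n. monom 1 (g i)) * [:det ?K:]"
    by (subst det_scale_rows) auto
  finally show ?thesis
    by (simp add: prod_monom_1)
qed

lemma sum_lessThan_id: "(\<Sum>j<n. j) = n * (n - 1) div (2::nat)"
  by (cases n) (simp_all add: lessThan_Suc_atMost atLeast0AtMost[symmetric] gauss_sum_nat)

lemma det_wronski_monoms:
  fixes g :: "nat \<Rightarrow> nat"
  assumes "inj_on g {..<n}"
  shows "\<exists>c::'a::field_char_0. c \<noteq> 0 \<and>
    det (wronski n (\<lambda>i. monom 1 (g i))) = smult c (monom 1 ((\<Sum>i<n. g i) - n * (n - 1) div 2))"
proof (intro exI conjI)
  define c where "c = det (mat n n (\<lambda>(i, j). of_nat (falling_fact (g i) j)) :: 'a mat)"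
  define S where "S = (\<Sum>i<n. g i)"
  define T where "T = n * (n - 1) div 2"
  show "c \<noteq> 0"
    unfolding c_def using assms by (rule det_falling_fact_neq_0)
  have eq: "monom 1 T * det (wronski n (\<lambda>i. monom 1 (g i))) = smult c (monom (1::'a) S)"
    using det_wronski_monom_mult_monom[of n g]
    by (simp add: c_def S_def T_def sum_lessThan_id mult.commute)
  have "T \<le> S"
  proof (rule ccontr)
    assume "\<not> T \<le> S"
    then have "coeff (monom (1::'a) T * det (wronski n (\<lambda>i. monom 1 (g i)))) S = 0"
      by (simp add: coeff_monom_mult)
    from this[unfolded eq] \<open>c \<noteq> 0\<close> show False
      by simp
  qed
  then have "monom 1 T * det (wronski n (\<lambda>i. monom 1 (g i))) = monom 1 T * smult c (monom 1 (S - T))"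
    by (simp add: eq mult_monom)
  then show "det (wronski n (\<lambda>i. monom 1 (g i))) = smult c (monom 1 (S - T))"
    by (subst (asm) mult_left_cancel) simp_all
qed

definition euler_op :: "nat \<Rightarrow> 'a::idom poly \<Rightarrow> 'a poly" where
  "euler_op d p = [:1, 1:] * pderiv p - smult (of_nat d) p"

lemma higher_pderiv_diff: "(pderiv ^^ k) (p - q) = (pderiv ^^ k) p - (pderiv ^^ k) (q :: 'a::idom poly)"
  by (induction k) (simp_all add: pderiv_diff)

lemma higher_pderiv_linear_mult_pderiv:
  "(pderiv ^^ k) ([:1, 1:] * pderiv p) = [:1, 1:] * (pderiv ^^ Suc k) p + smult (of_nat k) ((pderiv ^^ k) p)"
proof (induction k)
  case (Suc k)
  have "(pderiv ^^ Suc k) ([:1, 1:] * pderiv p)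
      = pderiv ([:1, 1:] * (pderiv ^^ Suc k) p + smult (of_nat k) ((pderiv ^^ k) p))"
    by (simp only: funpow.simps(2) comp_def Suc.IH)
  also have "\<dots> = [:1, 1:] * (pderiv ^^ Suc (Suc k)) p + smult (of_nat (Suc k)) ((pderiv ^^ Suc k) p)"
    by (simp add: pderiv_add pderiv_smult pderiv_mult pderiv_pCons algebra_simps smult_add_left
        flip: one_pCons del: mult_pCons_left)
  finally show ?case .
qed simp

lemma higher_pderiv_euler_op:
  "(pderiv ^^ k) (euler_op d p)
     = [:1, 1:] * (pderiv ^^ Suc k) p - smult (of_nat d - of_nat k) ((pderiv ^^ k) p)"
  unfolding euler_op_def higher_pderiv_diff higher_pderiv_linear_mult_pderiv higher_pderiv_smult
  by (simp add: smult_diff_left)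

lemma euler_op_linear_power: "euler_op d ([:1, 1:] ^ d) = 0"
proof (cases d)
  case (Suc n)
  have deriv: "pderiv ([:1, 1:] ^ Suc n) = smult (of_nat (Suc n)) ([:1, 1:] ^ n)"
    by (simp add: pderiv_power_Suc pderiv_pCons del: power_Suc)
  show ?thesis
    unfolding Suc euler_op_def deriv by (simp del: mult_pCons_left)
qed (simp add: euler_op_def)

definition euler_col_op :: "nat \<Rightarrow> nat \<Rightarrow> 'a::idom poly mat" where
  "euler_col_op n d = mat n n (\<lambda>(i, j).
     if i = j then (if j = 0 then 1 else [:1, 1:])
     else if j = Suc i then [:- (of_nat d - of_nat i):] else 0)"

lemma dim_euler_col_op [simp]: "dim_row (euler_col_op n d) = n" "dim_col (euler_col_op n d) = n"
  by (simp_all add: euler_col_op_def)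

lemma euler_col_op_carrier_mat [simp]: "euler_col_op n d \<in> carrier_mat n n"
  by (simp add: euler_col_op_def)

lemma det_euler_col_op: "det (euler_col_op n d) = [:1, 1:] ^ (n - 1)"
proof -
  have "det (euler_col_op n d) = (\<Prod>i<n. if i = 0 then 1 else [:1, 1:])"
    by (subst det_upper_triangular[of _ n])
      (auto simp: upper_triangular_def euler_col_op_def prod_list_diag_prod atLeast0LessThan)
  also have "\<dots> = [:1, 1:] ^ (n - 1)"
    by (cases n) (simp_all add: prod.lessThan_Suc_shift del: prod.lessThan_Suc)
  finally show ?thesis .
qed

lemma wronski_mult_euler_col_op:
  assumes "i < n" "j < n"
  shows "(wronski n f * euler_col_op n d) $$ (i, j)
    = (if j = 0 then f i else (pderiv ^^ (j - 1)) (euler_op d (f i)))"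
proof -
  have prod: "(wronski n f * euler_col_op n d) $$ (i, j)
      = (\<Sum>k<n. wronski n f $$ (i, k) * euler_col_op n d $$ (k, j))"
    using assms by (simp add: scalar_prod_def atLeast0LessThan)
  show ?thesis
  proof (cases j)
    case 0
    then show ?thesis
      using assms unfolding prod
      by (simp add: euler_col_op_def if_distrib[of "\<lambda>x. _ * x"] cong: if_cong)
  next
    case (Suc k)
    have "(\<Sum>l<n. wronski n f $$ (i, l) * euler_col_op n d $$ (l, j))
        = (\<Sum>l<n. (if l = j then wronski n f $$ (i, l) * [:1, 1:] else 0)
            + (if l = k then wronski n f $$ (i, l) * [:- (of_nat d - of_nat k):] else 0))"
      using assms Suc by (intro sum.cong) (auto simp: euler_col_op_def)
    also have "\<dots>
        = [:1, 1:] * (pderiv ^^ Suc k) (f i) - smult (of_nat d - of_nat k) ((pderiv ^^ k) (f i))"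
      using assms Suc
      by (simp add: sum.distrib algebra_simps del: mult_pCons_left) (simp flip: smult_add_left)
    finally show ?thesis
      unfolding prod using Suc by (simp add: higher_pderiv_euler_op del: funpow.simps)
  qed
qed

lemma det_wronski_euler_op:
  fixes f :: "nat \<Rightarrow> 'a::idom poly"
  assumes "euler_op d (f 0) = 0"
  shows "det (wronski (Suc n) f) * [:1, 1:] ^ n = f 0 * det (wronski n (\<lambda>i. euler_op d (f (Suc i))))"
proof -
  let ?B = "wronski (Suc n) f * euler_col_op (Suc n) d"
  have B: "?B \<in> carrier_mat (Suc n) (Suc n)"
    by (rule mult_carrier_mat[of _ _ "Suc n"]) simp_all
  have "det (wronski (Suc n) f) * [:1, 1:] ^ n = det ?B"
    by (simp add: det_mult[of _ "Suc n"] det_euler_col_op)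
  also have "\<dots> = ?B $$ (0, 0) * det (mat_delete ?B 0 0)"
    by (rule det_first_row_single[OF B]) (simp add: wronski_mult_euler_col_op assms del: index_mult_mat(1))
  also have "mat_delete ?B 0 0 = wronski n (\<lambda>i. euler_op d (f (Suc i)))"
    by (intro eq_matI) (simp_all add: mat_delete_def wronski_mult_euler_col_op del: index_mult_mat(1))
  finally show ?thesis
    by (simp add: wronski_mult_euler_col_op del: index_mult_mat(1))
qed

lemma coeff_trunc_binom: "coeff (trunc_binom m d) k = (if k \<le> m then of_nat (d choose k) else 0)"
  unfolding trunc_binom_def by (simp add: coeff_sum)

lemma trunc_binom_self: "trunc_binom d d = [:1, 1:] ^ d"
proof (rule poly_eqI)
  fix k
  show "coeff (trunc_binom d d) k = coeff ([:1, 1:] ^ d) k"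
    using coeff_linear_poly_power[of k d "1::real" 1] coeff_eq_0[of "[:1, 1:] ^ d :: real poly" k]
      degree_linear_power[of "1::real" d]
    by (auto simp: coeff_trunc_binom)
qed

lemma euler_op_trunc_binom:
  assumes "m < d"
  shows "euler_op d (trunc_binom m d) = monom (- (of_nat (d - m) * of_nat (d choose m))) m"
proof (rule poly_eqI)
  fix k
  let ?a = "\<lambda>k. coeff (trunc_binom m d) k"
  let ?r = "monom (- (of_nat (d - m) * of_nat (d choose m))) m"
  have "coeff (euler_op d (trunc_binom m d)) k = real (Suc k) * ?a (Suc k) + real k * ?a k - real d * ?a k"
    by (cases k) (simp_all add: euler_op_def coeff_pderiv algebra_simps)
  also have "\<dots> = coeff ?r k"
  proof (cases "k < m")
    case True
    have "real (Suc k) * real (d choose Suc k) = (real d - real k) * real (d choose k)"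
      using binomial_absorb_comp[of d k] binomial_absorption[of k d] assms True
      by (metis of_nat_diff of_nat_mult less_imp_le order.strict_trans mult.commute)
    then show ?thesis
      using True by (simp add: coeff_trunc_binom algebra_simps)
  next
    case False
    then show ?thesis
      using assms by (cases "k = m") (auto simp: coeff_trunc_binom algebra_simps of_nat_diff)
  qed
  finally show "coeff (euler_op d (trunc_binom m d)) k = coeff ?r k" .
qed

lemma wronski_tb_eq_wronski:
  "wronski_tb N d m = wronski (Suc N) (\<lambda>i. trunc_binom (if i = 0 then d else m i) d)"
  by (simp add: wronski_tb_def wronski_def)

lemma det_wronski_tb_eq_wronski_monoms:
  assumes m_less: "\<And>i. i \<in> {1..N} \<Longrightarrow> m i < d" and "N \<le> d"
  shows "det (wronski_tb N d m)
    = smult (\<Prod>i<N. - (real (d - m (Suc i)) * real (d choose m (Suc i))))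
        (det (wronski N (\<lambda>i. monom 1 (m (Suc i)))) * [:1, 1:] ^ (d - N))"
proof -
  define f where "f i = trunc_binom (if i = 0 then d else m i) d" for i
  let ?e = "\<lambda>i. - (real (d - m (Suc i)) * real (d choose m (Suc i)))"
  let ?M = "wronski N (\<lambda>i. monom 1 (m (Suc i)))"
  have f0: "f 0 = [:1, 1:] ^ d"
    by (simp add: f_def trunc_binom_self)
  have euler_f: "wronski N (\<lambda>i. euler_op d (f (Suc i)))
      = wronski N (\<lambda>i. smult (?e i) (monom 1 (m (Suc i))))"
    by (intro wronski_cong) (simp add: f_def euler_op_trunc_binom m_less smult_monom)
  have Yd: "[:1, 1:] ^ d = [:1, 1:] ^ (d - N) * ([:1, 1:] ^ N :: real poly)"
    using \<open>N \<le> d\<close> by (simp flip: power_add)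
  have "det (wronski_tb N d m) * [:1, 1:] ^ N = f 0 * det (wronski N (\<lambda>i. euler_op d (f (Suc i))))"
    unfolding wronski_tb_eq_wronski f_def[symmetric]
    by (rule det_wronski_euler_op) (unfold f0, rule euler_op_linear_power)
  also have "\<dots> = [:1, 1:] ^ d * smult (\<Prod>i<N. ?e i) (det ?M)"
    by (simp only: f0 euler_f det_wronski_smult)
  also have "\<dots> = smult (\<Prod>i<N. ?e i) (det ?M * [:1, 1:] ^ (d - N)) * [:1, 1:] ^ N"
    unfolding Yd by (simp add: mult_ac)
  finally show ?thesis
    by (rule mult_right_cancel[THEN iffD1, rotated]) simp
qed

theorem mainTheorem2:
  fixes N d :: nat and m :: "nat \<Rightarrow> nat"
  assumes "N \<ge> 1"
    and "strict_mono_on {1..N} m"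
    and "m N < d"
  shows "\<exists>c::real. c \<noteq> 0 \<and>
    det (wronski_tb N d m) =
      smult c (monom 1 ((\<Sum>i=1..N. m i) - N * (N - 1) div 2) * [:1, 1:] ^ (d - N))"
proof -
  have m_less: "m i < d" if "i \<in> {1..N}" for i
    using strict_mono_on_leD[OF assms(2) that, of N] that assms(3) by simp
  have inj: "inj_on m {1..N}"
    using assms(2) by (rule strict_mono_on_imp_inj_on)
  have "card {1..N} \<le> card {..<d}"
    by (rule card_inj_on_le[OF inj]) (use m_less in auto)
  then have "N \<le> d"
    by simp
  have "inj_on (\<lambda>i. m (Suc i)) {..<N}"
    using comp_inj_on[of Suc "{..<N}" m] inj by (simp add: image_Suc_lessThan comp_def)
  from det_wronski_monoms[where 'a = real, OF this]
  obtain c :: real where "c \<noteq> 0" and monoms: "det (wronski N (\<lambda>i. monom 1 (m (Suc i))))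
      = smult c (monom 1 ((\<Sum>i<N. m (Suc i)) - N * (N - 1) div 2))"
    by blast
  define k where "k = (\<Prod>i<N. - (real (d - m (Suc i)) * real (d choose m (Suc i)))) * c"
  have "- (real (d - m (Suc i)) * real (d choose m (Suc i))) \<noteq> 0" if "i < N" for i
    using m_less[of "Suc i"] that by simp
  with \<open>c \<noteq> 0\<close> have "k \<noteq> 0"
    by (simp add: k_def)
  moreover have "det (wronski_tb N d m)
      = smult k (monom 1 ((\<Sum>i=1..N. m i) - N * (N - 1) div 2) * [:1, 1:] ^ (d - N))"
    using det_wronski_tb_eq_wronski_monoms[OF m_less \<open>N \<le> d\<close>]
    by (simp add: monoms k_def sum.atLeast1_atMost_eq)
  ultimately show ?thesis
    by blast
qed

end
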